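(* Let $X$ be a real Banach space and $\alpha>0$; put $X_\alpha=X\setminus\alpha B_X$. The following statements are equivalent. (1) $X$ is UR. (2) $r(Q_{S_X}(x,\frac1n),Q_{S_X}(x',\frac1n))\to\left\|\frac{x}{\|x\|}-\frac{x'}{\|x'\|}\right\|$ uniformly on $X_\alpha\times X_\alpha$, i.e. $\sup_{x,x'\in X_\alpha}\left|r(Q_{S_X}(x,\frac1n),Q_{S_X}(x',\frac1n))-\left\|\frac{x}{\|x\|}-\frac{x'}{\|x'\|}\right\|\right|\to0$. (3) $\sup_{x\in X_\alpha}\mathrm{diam}(Q_{S_X}(x,\frac1n))\to0$. (4) $Q_{S_X}(x)=\{-\frac{x}{\|x\|}\}$ for every $x\in X_\alpha$ and $\sup_{x\in X_\alpha}H(Q_{S_X}(x,\frac1n),Q_{S_X}(x))\to0$. (5) $S_X$ is USUR on $X_\alpha$.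
   Context: $B_X,S_X$ are the closed unit ball and unit sphere of $X$. For non-empty bounded $F$, $x\in X$, $\delta\ge0$: $r(F,x)=\sup_{y\in F}\|x-y\|$, $Q_F(x,\delta)=\{y\in F:\|x-y\|\ge r(F,x)-\delta\}$, $Q_F(x)=Q_F(x,0)$. $F$ is USUR (uniformly strongly uniquely remotal) on $A$ if $Q_F(x)$ is a singleton for every $x\in A$ and for every $\epsilon>0$ there is $\delta>0$ such that $Q_F(x,\delta)\subseteq Q_F(x)+\epsilon B_X$ for every $x\in A$. For non-empty bounded $A,B$: $r(A,B)=\sup\{\|a-b\|:a\in A,b\in B\}$ and $H(A,B)=\inf\{r>0:A\subseteq B+rB_X, B\subseteq A+rB_X\}$ (Hausdorff distance). $X$ is UR if $\|x_n-y_n\|\to0$ whenever $(x_n),(y_n)\subseteq S_X$ with $\|\frac{x_n+y_n}{2}\|\to1$. *)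

theory Defs
  imports "HOL-Analysis.Analysis"
begin

definition rad :: "'a::real_normed_vector set \<Rightarrow> 'a \<Rightarrow> real" where
  "rad F x = (SUP y\<in>F. norm (x - y))"

definition farQ :: "'a::real_normed_vector set \<Rightarrow> 'a \<Rightarrow> real \<Rightarrow> 'a set" where
  "farQ F x \<delta> = {y \<in> F. rad F x - \<delta> \<le> norm (x - y)}"

definition farQ0 :: "'a::real_normed_vector set \<Rightarrow> 'a \<Rightarrow> 'a set" where
  "farQ0 F x = farQ F x 0"

definition enlarge :: "'a::real_normed_vector set \<Rightarrow> real \<Rightarrow> 'a set" where
  "enlarge A r = {a + v |a v. a \<in> A \<and> norm v \<le> r}"

definition USUR :: "'a::real_normed_vector set \<Rightarrow> 'a set \<Rightarrow> bool" where
  "USUR F A \<longleftrightarrow>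
     (\<forall>x\<in>A. \<exists>y. farQ0 F x = {y}) \<and>
     (\<forall>\<epsilon>>0. \<exists>\<delta>>0. \<forall>x\<in>A. farQ F x \<delta> \<subseteq> enlarge (farQ0 F x) \<epsilon>)"

definition rad_sets :: "'a::real_normed_vector set \<Rightarrow> 'a set \<Rightarrow> real" where
  "rad_sets A B = Sup {norm (a - b) |a b. a \<in> A \<and> b \<in> B}"

definition hausd :: "'a::real_normed_vector set \<Rightarrow> 'a set \<Rightarrow> real" where
  "hausd A B = Inf {r. r > 0 \<and> A \<subseteq> enlarge B r \<and> B \<subseteq> enlarge A r}"

definition UR :: "'a::real_normed_vector itself \<Rightarrow> bool" where
  "UR (TYPE('a)) \<longleftrightarrow>
     (\<forall>x y :: nat \<Rightarrow> 'a. (\<forall>n. norm (x n) = 1 \<and> norm (y n) = 1) \<longrightarrow>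
        (\<lambda>n. norm ((1/2) *\<^sub>R (x n + y n))) \<longlonglongrightarrow> 1 \<longrightarrow>
        (\<lambda>n. norm (x n - y n)) \<longlonglongrightarrow> 0)"

end

theory Submission
  imports Defs
begin

text \<open>
  For \<open>x \<noteq> 0\<close> the farthest point of the unit sphere \<open>S\<close> from \<open>x\<close> is the antipode \<open>-x/\<parallel>x\<parallel>\<close>,
  at distance \<open>\<parallel>x\<parallel> + 1\<close>; so \<open>Q\<^sub>S(x,\<delta>)\<close> always contains the antipode, and every
  \<open>y \<in> Q\<^sub>S(x,\<delta>)\<close> satisfies \<open>\<parallel>x/\<parallel>x\<parallel> - y\<parallel> \<ge> 2 - \<delta>/min 1 \<parallel>x\<parallel>\<close>. Hence the \<open>\<epsilon>\<close>-\<open>\<eta>\<close> form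
  of uniform rotundity (unit vectors whose sum has norm near 2 are close) forces \<open>Q\<^sub>S(x,\<delta>)\<close> to
  shrink to the antipode uniformly for \<open>\<parallel>x\<parallel> > \<alpha>\<close>. Conversely, unit vectors \<open>a, b\<close> both lie in
  \<open>Q\<^sub>S(-m(a + b), \<delta>)\<close> for every \<open>m > 0\<close> as soon as \<open>\<delta> \<ge> 2 - \<parallel>a + b\<parallel>\<close>; taking \<open>m\<close> large puts
  \<open>-m(a + b)\<close> in \<open>X\<^sub>\<alpha>\<close>, so the uniform shrinking gives back uniform rotundity.
  Conditions (2)--(5) are reformulations of the uniform shrinking, since the diameter of
  \<open>Q\<^sub>S(x,\<delta>)\<close>, its Hausdorff distance to the antipode and \<open>r(Q\<^sub>S(x,\<delta>), Q\<^sub>S(x',\<delta>))\<close> are all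
  controlled by the radius of \<open>Q\<^sub>S(x,\<delta>)\<close> around the antipode.
\<close>

section \<open>Far points of the unit sphere\<close>

lemma norm_add_sgn:
  fixes x :: "'a::real_normed_vector"
  assumes "x \<noteq> 0"
  shows "norm (x + sgn x) = norm x + 1"
proof -
  have "x + sgn x = (norm x + 1) *\<^sub>R sgn x"
    using assms by (simp add: sgn_div_norm algebra_simps)
  then show ?thesis
    using assms by (simp add: norm_sgn)
qed

lemma rad_unit_sphere:
  fixes x :: "'a::real_normed_vector"
  assumes "x \<noteq> 0"
  shows "rad (sphere 0 1) x = norm x + 1"
  unfolding rad_def
proof (rule cSup_eq_maximum)
  have "norm (x - - sgn x) = norm x + 1"
    using norm_add_sgn[OF assms] by simp
  moreover have "- sgn x \<in> sphere 0 1"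
    using assms by (simp add: norm_sgn)
  ultimately show "norm x + 1 \<in> (\<lambda>y. norm (x - y)) ` sphere 0 1"
    by (metis image_eqI)
qed (auto intro: order_trans[OF norm_triangle_ineq4])

lemma mem_farQ_unit_sphere:
  fixes x :: "'a::real_normed_vector"
  assumes "x \<noteq> 0"
  shows "y \<in> farQ (sphere 0 1) x d \<longleftrightarrow> norm y = 1 \<and> norm x + 1 - d \<le> norm (x - y)"
  using rad_unit_sphere[OF assms] unfolding farQ_def by auto

lemma antipode_mem_farQ:
  fixes x :: "'a::real_normed_vector"
  assumes "x \<noteq> 0" "0 \<le> d"
  shows "- sgn x \<in> farQ (sphere 0 1) x d"
  using assms norm_add_sgn[OF assms(1)] by (simp add: mem_farQ_unit_sphere norm_sgn)

lemma farQ_mono: "d \<le> d' \<Longrightarrow> farQ F x d \<subseteq> farQ F x d'"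
  unfolding farQ_def by auto

lemma bounded_farQ_unit_sphere: "bounded (farQ (sphere 0 1) x d)"
  unfolding farQ_def by (rule bounded_subset[OF bounded_cball[of 0 1]]) auto

lemma norm_sgn_diff_ge_of_mem_farQ:
  fixes x :: "'a::real_normed_vector"
  assumes "x \<noteq> 0" and y: "y \<in> farQ (sphere 0 1) x d"
  shows "2 - d / min 1 (norm x) \<le> norm (sgn x - y)"
proof -
  have ny: "norm y = 1" and far: "norm x + 1 - d \<le> norm (x - y)"
    using y by (simp_all add: mem_farQ_unit_sphere[OF assms(1)])
  have nx: "0 < norm x" and x_eq: "x = norm x *\<^sub>R sgn x"
    using assms(1) by (simp_all add: sgn_div_norm)
  show ?thesis
  proof (cases "1 \<le> norm x")
    case True
    have "x - y = (sgn x - y) + (norm x - 1) *\<^sub>R sgn x"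
      by (subst (1) x_eq) (simp add: algebra_simps)
    then have "norm (x - y) \<le> norm (sgn x - y) + norm ((norm x - 1) *\<^sub>R sgn x)"
      by (metis norm_triangle_ineq)
    also have "norm ((norm x - 1) *\<^sub>R sgn x) = norm x - 1"
      using True assms(1) by (simp add: norm_sgn)
    finally show ?thesis
      using far True by simp
  next
    case False
    have "x - y = norm x *\<^sub>R (sgn x - y) - (1 - norm x) *\<^sub>R y"
      by (subst (1) x_eq) (simp add: algebra_simps)
    then have "norm (x - y) \<le> norm x * norm (sgn x - y) + (1 - norm x)"
      using False ny norm_triangle_ineq4[of "norm x *\<^sub>R (sgn x - y)" "(1 - norm x) *\<^sub>R y"]
      by simp
    then have "norm x * (2 - d / norm x) \<le> norm x * norm (sgn x - y)"
      using far nx by (simp add: algebra_simps)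
    then show ?thesis
      using False nx by simp
  qed
qed

lemma unit_mem_farQ_of_sum:
  fixes a b :: "'a::real_normed_vector"
  assumes "norm a = 1" "norm b = 1" "a + b \<noteq> 0" "m > 0" "2 - norm (a + b) \<le> d"
  shows "a \<in> farQ (sphere 0 1) (- (m *\<^sub>R (a + b))) d"
proof -
  let ?w = "- (m *\<^sub>R (a + b))"
  have "?w \<noteq> 0" and norm_w: "norm ?w = m * norm (a + b)"
    using assms(3,4) by simp_all
  have "?w - a = - ((m + 1) *\<^sub>R (a + b) - b)"
    by (simp add: algebra_simps)
  then have "norm (?w - a) = norm ((m + 1) *\<^sub>R (a + b) - b)"
    by (simp only: norm_minus_cancel)
  also have "\<dots> \<ge> (m + 1) * norm (a + b) - 1"
    using assms(2,4) norm_triangle_ineq2[of "(m + 1) *\<^sub>R (a + b)" b] by simp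
  finally have "norm ?w + 1 - d \<le> norm (?w - a)"
    using norm_w assms(5) by (simp add: algebra_simps)
  then show ?thesis
    using mem_farQ_unit_sphere[OF \<open>?w \<noteq> 0\<close>] assms(1) by blast
qed

section \<open>Uniform rotundity as uniform concentration at the antipode\<close>

lemma UR_iff_modulus:
  "UR TYPE('a::real_normed_vector) \<longleftrightarrow>
     (\<forall>\<epsilon>>0. \<exists>\<eta>>0. \<forall>a b::'a. norm a = 1 \<longrightarrow> norm b = 1 \<longrightarrow> 2 - \<eta> \<le> norm (a + b) \<longrightarrow> norm (a - b) \<le> \<epsilon>)"
  (is "_ \<longleftrightarrow> ?modulus")
proof
  assume UR: "UR TYPE('a)"
  show ?modulus
  proof (rule ccontr)
    assume "\<not> ?modulus"
    then obtain \<epsilon> where "\<epsilon> > 0" and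
      bad: "\<forall>\<eta>>0. \<exists>a b::'a. norm a = 1 \<and> norm b = 1 \<and> 2 - \<eta> \<le> norm (a + b) \<and> \<epsilon> < norm (a - b)"
      by (auto simp: not_le)
    then have "\<forall>n. \<exists>a b::'a. norm a = 1 \<and> norm b = 1 \<and> 2 - inverse (real (Suc n)) \<le> norm (a + b) \<and> \<epsilon> < norm (a - b)"
      by simp
    then obtain a b :: "nat \<Rightarrow> 'a" where
      unit: "\<And>n. norm (a n) = 1" "\<And>n. norm (b n) = 1" and
      sum: "\<And>n. 2 - inverse (real (Suc n)) \<le> norm (a n + b n)" and
      diff: "\<And>n. \<epsilon> < norm (a n - b n)"
      by metis
    have "(\<lambda>n. 1 - inverse (real (Suc n)) / 2) \<longlonglongrightarrow> 1 - 0 / 2"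
      by (intro tendsto_intros LIMSEQ_inverse_real_of_nat) simp
    then have lower: "(\<lambda>n. 1 - inverse (real (Suc n)) / 2) \<longlonglongrightarrow> 1"
      by simp
    have "(\<lambda>n. norm ((1/2) *\<^sub>R (a n + b n))) \<longlonglongrightarrow> 1"
    proof (rule tendsto_sandwich[OF _ _ lower tendsto_const])
      show "\<forall>\<^sub>F n in sequentially. 1 - inverse (real (Suc n)) / 2 \<le> norm ((1/2) *\<^sub>R (a n + b n))"
        using sum by (intro always_eventually) simp
      show "\<forall>\<^sub>F n in sequentially. norm ((1/2) *\<^sub>R (a n + b n)) \<le> 1"
        using unit norm_triangle_ineq[of "a _" "b _"] by (intro always_eventually) simp
    qed
    then have "(\<lambda>n. norm (a n - b n)) \<longlonglongrightarrow> 0"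
      using UR unit unfolding UR_def by blast
    then have "\<forall>\<^sub>F n in sequentially. norm (a n - b n) < \<epsilon>"
      using \<open>\<epsilon> > 0\<close> by (rule order_tendstoD)
    then obtain n where "norm (a n - b n) < \<epsilon>"
      unfolding eventually_sequentially by blast
    then show False
      using diff[of n] by simp
  qed
next
  assume modulus: ?modulus
  show "UR TYPE('a)"
    unfolding UR_def
  proof (intro allI impI)
    fix x y :: "nat \<Rightarrow> 'a"
    assume unit: "\<forall>n. norm (x n) = 1 \<and> norm (y n) = 1"
      and mid: "(\<lambda>n. norm ((1/2) *\<^sub>R (x n + y n))) \<longlonglongrightarrow> 1"
    show "(\<lambda>n. norm (x n - y n)) \<longlonglongrightarrow> 0"
    proof (rule LIMSEQ_I)
      fix r :: real
      assume "0 < r"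
      then obtain \<eta> where "\<eta> > 0" and \<eta>: "\<forall>a b::'a. norm a = 1 \<longrightarrow> norm b = 1 \<longrightarrow> 2 - \<eta> \<le> norm (a + b) \<longrightarrow> norm (a - b) \<le> r / 2"
        using modulus half_gt_zero by blast
      then obtain N where N: "\<forall>n\<ge>N. \<bar>norm (x n + y n) / 2 - 1\<bar> < \<eta> / 2"
        using LIMSEQ_D[OF mid, of "\<eta> / 2"] by auto
      have "norm (norm (x n - y n) - 0) < r" if "n \<ge> N" for n
      proof -
        have "\<bar>norm (x n + y n) / 2 - 1\<bar> < \<eta> / 2"
          using N that by blast
        then have "2 - \<eta> \<le> norm (x n + y n)"
          unfolding abs_less_iff by linarith
        then have "norm (x n - y n) \<le> r / 2"
          using \<eta> unit by blast
        then show ?thesis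
          using \<open>0 < r\<close> by simp
      qed
      then show "\<exists>N. \<forall>n\<ge>N. norm (norm (x n - y n) - 0) < r"
        by blast
    qed
  qed
qed

definition far_points_near_antipode_on :: "'a::real_normed_vector set \<Rightarrow> bool" where
  "far_points_near_antipode_on A \<longleftrightarrow>
     (\<forall>\<epsilon>>0. \<exists>\<delta>>0. \<forall>x\<in>A. farQ (sphere 0 1) x \<delta> \<subseteq> cball (- sgn x) \<epsilon>)"

lemma modulus_imp_far_points_near_antipode:
  fixes \<alpha> :: real
  assumes "\<alpha> > 0"
    and modulus: "\<forall>\<epsilon>>0. \<exists>\<eta>>0. \<forall>a b::'a::real_normed_vector.
                    norm a = 1 \<longrightarrow> norm b = 1 \<longrightarrow> 2 - \<eta> \<le> norm (a + b) \<longrightarrow> norm (a - b) \<le> \<epsilon>"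
  shows "far_points_near_antipode_on {x::'a. \<alpha> < norm x}"
  unfolding far_points_near_antipode_on_def
proof (intro allI impI)
  fix \<epsilon> :: real
  assume "\<epsilon> > 0"
  then obtain \<eta> where "\<eta> > 0" and \<eta>: "\<forall>a b::'a. norm a = 1 \<longrightarrow> norm b = 1 \<longrightarrow> 2 - \<eta> \<le> norm (a + b) \<longrightarrow> norm (a - b) \<le> \<epsilon>"
    using modulus by blast
  define \<delta> where "\<delta> = \<eta> * min 1 \<alpha>"
  have "farQ (sphere 0 1) x \<delta> \<subseteq> cball (- sgn x) \<epsilon>" if "\<alpha> < norm x" for x :: 'a
  proof
    fix y
    assume y: "y \<in> farQ (sphere 0 1) x \<delta>"
    have "x \<noteq> 0"
      using that \<open>\<alpha> > 0\<close> by auto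
    have "\<delta> / min 1 (norm x) \<le> \<eta>"
      using that \<open>\<alpha> > 0\<close> \<open>\<eta> > 0\<close> by (simp add: \<delta>_def divide_le_eq mult_left_mono)
    then have "2 - \<eta> \<le> norm (sgn x + - y)"
      using norm_sgn_diff_ge_of_mem_farQ[OF \<open>x \<noteq> 0\<close> y] by simp
    moreover have "norm (sgn x) = 1" "norm (- y) = 1"
      using \<open>x \<noteq> 0\<close> y by (simp_all add: norm_sgn mem_farQ_unit_sphere)
    ultimately have "norm (sgn x - - y) \<le> \<epsilon>"
      using \<eta> by blast
    then show "y \<in> cball (- sgn x) \<epsilon>"
      by (simp add: dist_norm norm_minus_commute add.commute)
  qed
  moreover have "\<delta> > 0"
    using \<open>\<alpha> > 0\<close> \<open>\<eta> > 0\<close> by (simp add: \<delta>_def)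
  ultimately show "\<exists>\<delta>>0. \<forall>x\<in>{x::'a. \<alpha> < norm x}. farQ (sphere 0 1) x \<delta> \<subseteq> cball (- sgn x) \<epsilon>"
    by auto
qed

lemma far_points_near_antipode_imp_modulus:
  assumes near: "far_points_near_antipode_on {x::'a::real_normed_vector. \<alpha> < norm x}"
  shows "\<forall>\<epsilon>>0. \<exists>\<eta>>0. \<forall>a b::'a. norm a = 1 \<longrightarrow> norm b = 1 \<longrightarrow> 2 - \<eta> \<le> norm (a + b) \<longrightarrow> norm (a - b) \<le> \<epsilon>"
proof (intro allI impI)
  fix \<epsilon> :: real
  assume "\<epsilon> > 0"
  then have "\<epsilon> / 2 > 0"
    by simp
  with near obtain \<delta> where "\<delta> > 0"
    and \<delta>: "\<forall>x\<in>{x::'a. \<alpha> < norm x}. farQ (sphere 0 1) x \<delta> \<subseteq> cball (- sgn x) (\<epsilon> / 2)"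
    unfolding far_points_near_antipode_on_def by blast
  have "norm (a - b) \<le> \<epsilon>"
    if "norm a = 1" "norm b = 1" "2 - min 1 \<delta> \<le> norm (a + b)" for a b :: 'a
  proof -
    define w where "w = - ((\<bar>\<alpha>\<bar> + 1) *\<^sub>R (a + b))"
    have "1 \<le> norm (a + b)"
      using that(3) min.cobounded1[of 1 \<delta>] by linarith
    then have "a + b \<noteq> 0"
      by auto
    have "\<bar>\<alpha>\<bar> + 1 \<le> (\<bar>\<alpha>\<bar> + 1) * norm (a + b)"
      using mult_left_mono[OF \<open>1 \<le> norm (a + b)\<close>, of "\<bar>\<alpha>\<bar> + 1"] by simp
    then have "\<alpha> < norm w"
      unfolding w_def by simp
    have "2 - norm (a + b) \<le> \<delta>"
      using that(3) min.cobounded2[of 1 \<delta>] by linarith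
    have "a \<in> farQ (sphere 0 1) w \<delta>"
      unfolding w_def
      by (rule unit_mem_farQ_of_sum) (use that \<open>a + b \<noteq> 0\<close> \<open>2 - norm (a + b) \<le> \<delta>\<close> in auto)
    moreover have "b \<in> farQ (sphere 0 1) w \<delta>"
      unfolding w_def add.commute[of a b]
      by (rule unit_mem_farQ_of_sum) (use that \<open>a + b \<noteq> 0\<close> \<open>2 - norm (a + b) \<le> \<delta>\<close> in \<open>auto simp: add.commute\<close>)
    ultimately have "a \<in> cball (- sgn w) (\<epsilon> / 2)" "b \<in> cball (- sgn w) (\<epsilon> / 2)"
      using \<delta> \<open>\<alpha> < norm w\<close> by blast+
    then have "dist a b \<le> \<epsilon>"
      using dist_triangle2[of a b "- sgn w"] by (simp add: dist_commute)
    then show ?thesis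
      by (simp add: dist_norm)
  qed
  moreover have "min 1 \<delta> > 0"
    using \<open>\<delta> > 0\<close> by simp
  ultimately show "\<exists>\<eta>>0. \<forall>a b::'a. norm a = 1 \<longrightarrow> norm b = 1 \<longrightarrow> 2 - \<eta> \<le> norm (a + b) \<longrightarrow> norm (a - b) \<le> \<epsilon>"
    by blast
qed

lemma UR_iff_far_points_near_antipode:
  fixes \<alpha> :: real
  assumes "\<alpha> > 0"
  shows "UR TYPE('a::real_normed_vector) \<longleftrightarrow> far_points_near_antipode_on {x::'a. \<alpha> < norm x}"
  using UR_iff_modulus modulus_imp_far_points_near_antipode[OF assms]
    far_points_near_antipode_imp_modulus by blast

section \<open>Diameter, Hausdorff distance and \<open>r(A,B)\<close> near a point\<close>

lemma diameter_le_of_subset_cball: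
  fixes S :: "'a::real_normed_vector set"
  assumes "c \<in> S" "S \<subseteq> cball c r"
  shows "diameter S \<le> 2 * r"
proof (rule diameter_le)
  show "S \<noteq> {} \<or> 0 \<le> 2 * r"
    using assms(1) by blast
  fix x y
  assume "x \<in> S" "y \<in> S"
  then have "dist x c \<le> r" "dist y c \<le> r"
    using assms(2) by (auto simp: dist_commute)
  then have "dist x y \<le> 2 * r"
    using dist_triangle2[of x y c] by linarith
  then show "norm (x - y) \<le> 2 * r"
    by (simp add: dist_norm)
qed

lemma subset_cball_diameter:
  assumes "bounded S" "c \<in> S"
  shows "S \<subseteq> cball c (diameter S)"
  using diameter_bounded_bound[OF assms] by auto

lemma enlarge_singleton: "enlarge {c} r = cball c r"
proof (intro set_eqI iffI)
  fix y
  assume "y \<in> cball c r"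
  then show "y \<in> enlarge {c} r"
    unfolding enlarge_def by (auto simp: dist_norm norm_minus_commute intro!: exI[where x = "y - c"])
qed (auto simp: enlarge_def dist_norm)

lemma singleton_subset_enlarge: "c \<in> A \<Longrightarrow> 0 \<le> r \<Longrightarrow> {c} \<subseteq> enlarge A r"
  unfolding enlarge_def by force

lemma hausd_singleton_le:
  assumes "c \<in> A" "A \<subseteq> cball c r" "0 < r"
  shows "hausd A {c} \<le> r"
  unfolding hausd_def
proof (rule cInf_lower)
  show "r \<in> {r. 0 < r \<and> A \<subseteq> enlarge {c} r \<and> {c} \<subseteq> enlarge A r}"
    using assms singleton_subset_enlarge[of c A r] by (simp add: enlarge_singleton)
qed (auto intro: bdd_belowI[where m = 0])

lemma subset_cball_of_hausd_singleton_less: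
  assumes "bounded A" "c \<in> A" "hausd A {c} < s"
  shows "A \<subseteq> cball c s"
proof -
  let ?R = "{r. 0 < r \<and> A \<subseteq> enlarge {c} r \<and> {c} \<subseteq> enlarge A r}"
  obtain e where "\<forall>y\<in>A. dist c y \<le> e"
    using assms(1) bounded_any_center by blast
  then have "max 1 e \<in> ?R"
    using assms(2) singleton_subset_enlarge[of c A "max 1 e"]
    by (force simp: enlarge_singleton)
  then obtain r where "r \<in> ?R" "r < s"
    using assms(3) cInf_lessD[of ?R s] unfolding hausd_def by blast
  then show ?thesis
    by (auto simp: enlarge_singleton)
qed

lemma norm_diff_le_rad_sets:
  assumes "bounded A" "bounded B" "a \<in> A" "b \<in> B"
  shows "norm (a - b) \<le> rad_sets A B"
proof -
  obtain MA MB where "\<forall>x\<in>A. norm x \<le> MA" "\<forall>x\<in>B. norm x \<le> MB"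
    using assms(1,2) bounded_iff by metis
  then have "bdd_above {norm (a - b) |a b. a \<in> A \<and> b \<in> B}"
    by (intro bdd_aboveI[where M = "MA + MB"]) (force intro: order_trans[OF norm_triangle_ineq4])
  then show ?thesis
    unfolding rad_sets_def using assms(3,4) by (auto intro: cSup_upper)
qed

lemma rad_sets_near_centres:
  fixes A B :: "'a::real_normed_vector set"
  assumes "c \<in> A" "c' \<in> B" "A \<subseteq> cball c e" "B \<subseteq> cball c' e'"
  shows "\<bar>rad_sets A B - dist c c'\<bar> \<le> e + e'"
proof -
  have "0 \<le> e" "0 \<le> e'"
    using assms by auto
  have "dist c c' \<le> rad_sets A B"
    using norm_diff_le_rad_sets[OF bounded_subset[OF bounded_cball assms(3)]
        bounded_subset[OF bounded_cball assms(4)] assms(1,2)]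
    by (simp add: dist_norm)
  moreover have "rad_sets A B \<le> dist c c' + (e + e')"
    unfolding rad_sets_def
  proof (rule cSup_least)
    show "{norm (a - b) |a b. a \<in> A \<and> b \<in> B} \<noteq> {}"
      using assms(1,2) by blast
    have "dist a b \<le> dist c c' + (e + e')" if "a \<in> A" "b \<in> B" for a b
    proof -
      have "dist c a \<le> e" "dist c' b \<le> e'"
        using that assms(3,4) by auto
      then show ?thesis
        using dist_triangle[of a b c] dist_triangle[of c b c'] by (simp add: dist_commute)
    qed
    then show "\<And>z. z \<in> {norm (a - b) |a b. a \<in> A \<and> b \<in> B} \<Longrightarrow> z \<le> dist c c' + (e + e')"
      by (auto simp: dist_norm)
  qed
  ultimately show ?thesis
    using \<open>0 \<le> e\<close> \<open>0 \<le> e'\<close> by linarith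
qed

lemma ex_pos_iff_ex_inverse_nat:
  fixes P :: "real \<Rightarrow> bool"
  assumes antimono: "\<And>d d'. 0 \<le> d \<Longrightarrow> d \<le> d' \<Longrightarrow> P d' \<Longrightarrow> P d"
  shows "(\<exists>\<delta>>0. P \<delta>) \<longleftrightarrow> (\<exists>N. \<forall>n\<ge>N. P (1 / real n))"
proof
  assume "\<exists>\<delta>>0. P \<delta>"
  then obtain \<delta> where "\<delta> > 0" "P \<delta>"
    by blast
  then obtain N :: nat where "inverse (real (Suc N)) < \<delta>"
    using reals_Archimedean by blast
  have "P (1 / real n)" if "n \<ge> Suc N" for n
  proof (rule antimono[OF _ _ \<open>P \<delta>\<close>])
    have "1 / real n \<le> inverse (real (Suc N))"
      using that by (simp add: divide_inverse le_imp_inverse_le)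
    then show "1 / real n \<le> \<delta>"
      using \<open>inverse (real (Suc N)) < \<delta>\<close> by linarith
  qed simp
  then show "\<exists>N. \<forall>n\<ge>N. P (1 / real n)"
    by blast
next
  assume "\<exists>N. \<forall>n\<ge>N. P (1 / real n)"
  then obtain N where "P (1 / real (Suc N))"
    by (meson le_SucI order_refl)
  then show "\<exists>\<delta>>0. P \<delta>"
    by (meson divide_pos_pos of_nat_0_less_iff zero_less_Suc zero_less_one)
qed

lemma far_points_near_antipode_on_iff_seq:
  "far_points_near_antipode_on A \<longleftrightarrow>
     (\<forall>\<epsilon>>0. \<exists>N. \<forall>n\<ge>N. \<forall>x\<in>A. farQ (sphere 0 1) x (1 / real n) \<subseteq> cball (- sgn x) \<epsilon>)"
proof -
  have "(\<exists>\<delta>>0. \<forall>x\<in>A. farQ (sphere 0 1) x \<delta> \<subseteq> cball (- sgn x) \<epsilon>) \<longleftrightarrow>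
        (\<exists>N. \<forall>n\<ge>N. \<forall>x\<in>A. farQ (sphere 0 1) x (1 / real n) \<subseteq> cball (- sgn x) \<epsilon>)" for \<epsilon>
    by (rule ex_pos_iff_ex_inverse_nat) (use farQ_mono in blast)
  then show ?thesis
    unfolding far_points_near_antipode_on_def by presburger
qed

lemma uniformly_small_transfer:
  fixes c :: real
  assumes small: "\<forall>\<epsilon>>0. \<exists>N. \<forall>n\<ge>N. \<forall>x\<in>A. P n x \<epsilon>"
    and "c > 0"
    and transfer: "\<And>n x \<epsilon>. x \<in> A \<Longrightarrow> \<epsilon> > 0 \<Longrightarrow> P n x \<epsilon> \<Longrightarrow> Q n x (c * \<epsilon>)"
  shows "\<forall>\<epsilon>>0. \<exists>N. \<forall>n\<ge>N. \<forall>x\<in>A. Q n x \<epsilon>"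
proof (intro allI impI)
  fix \<epsilon> :: real
  assume "\<epsilon> > 0"
  then obtain N where N: "\<forall>n\<ge>N. \<forall>x\<in>A. P n x (\<epsilon> / c)"
    using small \<open>c > 0\<close> by (meson divide_pos_pos)
  have "Q n x \<epsilon>" if "n \<ge> N" "x \<in> A" for n x
  proof -
    have "Q n x (c * (\<epsilon> / c))"
      by (rule transfer) (use N that \<open>\<epsilon> > 0\<close> \<open>c > 0\<close> in auto)
    then show ?thesis
      using \<open>c > 0\<close> by simp
  qed
  then show "\<exists>N. \<forall>n\<ge>N. \<forall>x\<in>A. Q n x \<epsilon>"
    by blast
qed

lemma farQ0_unit_sphere_eq_antipode:
  assumes near: "far_points_near_antipode_on A" and "x \<in> A" "x \<noteq> 0"
  shows "farQ0 (sphere 0 1) x = {- sgn x}"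
proof
  show "{- sgn x} \<subseteq> farQ0 (sphere 0 1) x"
    using antipode_mem_farQ[OF \<open>x \<noteq> 0\<close> order_refl] by (simp add: farQ0_def)
  show "farQ0 (sphere 0 1) x \<subseteq> {- sgn x}"
  proof
    fix y
    assume y: "y \<in> farQ0 (sphere 0 1) x"
    have "dist (- sgn x) y \<le> 0 + \<epsilon>" if "\<epsilon> > 0" for \<epsilon>
    proof -
      obtain \<delta> where "\<delta> > 0" "farQ (sphere 0 1) x \<delta> \<subseteq> cball (- sgn x) \<epsilon>"
        using near \<open>\<epsilon> > 0\<close> \<open>x \<in> A\<close> unfolding far_points_near_antipode_on_def by blast
      moreover have "y \<in> farQ (sphere 0 1) x \<delta>"
        using y farQ_mono[OF less_imp_le[OF \<open>\<delta> > 0\<close>]] unfolding farQ0_def by blast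
      ultimately show ?thesis
        by auto
    qed
    then show "y \<in> {- sgn x}"
      using field_le_epsilon[of "dist (- sgn x) y" 0] by simp
  qed
qed

lemma far_points_near_antipode_on_iff_diameter:
  assumes "0 \<notin> A"
  shows "far_points_near_antipode_on A \<longleftrightarrow>
    (\<forall>\<epsilon>>0. \<exists>N. \<forall>n\<ge>N. \<forall>x\<in>A. diameter (farQ (sphere 0 1) x (1 / real n)) \<le> \<epsilon>)"
  unfolding far_points_near_antipode_on_iff_seq
proof
  assume "\<forall>\<epsilon>>0. \<exists>N. \<forall>n\<ge>N. \<forall>x\<in>A. farQ (sphere 0 1) x (1 / real n) \<subseteq> cball (- sgn x) \<epsilon>"
  then show "\<forall>\<epsilon>>0. \<exists>N. \<forall>n\<ge>N. \<forall>x\<in>A. diameter (farQ (sphere 0 1) x (1 / real n)) \<le> \<epsilon>"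
  proof (rule uniformly_small_transfer[where c = 2])
    fix n x \<epsilon>
    assume "x \<in> A" "farQ (sphere 0 1) x (1 / real n) \<subseteq> cball (- sgn x) \<epsilon>"
    then show "diameter (farQ (sphere 0 1) x (1 / real n)) \<le> 2 * \<epsilon>"
      using assms by (intro diameter_le_of_subset_cball[OF antipode_mem_farQ]) auto
  qed simp
next
  assume "\<forall>\<epsilon>>0. \<exists>N. \<forall>n\<ge>N. \<forall>x\<in>A. diameter (farQ (sphere 0 1) x (1 / real n)) \<le> \<epsilon>"
  then show "\<forall>\<epsilon>>0. \<exists>N. \<forall>n\<ge>N. \<forall>x\<in>A. farQ (sphere 0 1) x (1 / real n) \<subseteq> cball (- sgn x) \<epsilon>"
  proof (rule uniformly_small_transfer[where c = 1])
    fix n x \<epsilon>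
    assume "x \<in> A" "diameter (farQ (sphere 0 1) x (1 / real n)) \<le> \<epsilon>"
    moreover have "farQ (sphere 0 1) x (1 / real n) \<subseteq> cball (- sgn x) (diameter (farQ (sphere 0 1) x (1 / real n)))"
      using assms \<open>x \<in> A\<close> by (intro subset_cball_diameter[OF bounded_farQ_unit_sphere antipode_mem_farQ]) auto
    ultimately show "farQ (sphere 0 1) x (1 / real n) \<subseteq> cball (- sgn x) (1 * \<epsilon>)"
      by (simp add: subset_cball order_trans)
  qed simp
qed

lemma far_points_near_antipode_on_iff_hausd:
  assumes "0 \<notin> A"
  shows "far_points_near_antipode_on A \<longleftrightarrow>
    (\<forall>x\<in>A. farQ0 (sphere 0 1) x = {- sgn x}) \<and>
    (\<forall>\<epsilon>>0. \<exists>N. \<forall>n\<ge>N. \<forall>x\<in>A. hausd (farQ (sphere 0 1) x (1 / real n)) (farQ0 (sphere 0 1) x) \<le> \<epsilon>)"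
proof
  assume near: "far_points_near_antipode_on A"
  then have Q0: "\<forall>x\<in>A. farQ0 (sphere 0 1) x = {- sgn x}"
    using assms farQ0_unit_sphere_eq_antipode by fastforce
  from near have "\<forall>\<epsilon>>0. \<exists>N. \<forall>n\<ge>N. \<forall>x\<in>A. farQ (sphere 0 1) x (1 / real n) \<subseteq> cball (- sgn x) \<epsilon>"
    by (simp only: far_points_near_antipode_on_iff_seq)
  then have "\<forall>\<epsilon>>0. \<exists>N. \<forall>n\<ge>N. \<forall>x\<in>A. hausd (farQ (sphere 0 1) x (1 / real n)) (farQ0 (sphere 0 1) x) \<le> \<epsilon>"
  proof (rule uniformly_small_transfer[where c = 1])
    fix n x \<epsilon>
    assume "x \<in> A" "\<epsilon> > 0" "farQ (sphere 0 1) x (1 / real n) \<subseteq> cball (- sgn x) \<epsilon>"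
    then show "hausd (farQ (sphere 0 1) x (1 / real n)) (farQ0 (sphere 0 1) x) \<le> 1 * \<epsilon>"
      using assms Q0 by (auto intro: hausd_singleton_le[OF antipode_mem_farQ])
  qed simp
  with Q0 show "(\<forall>x\<in>A. farQ0 (sphere 0 1) x = {- sgn x}) \<and>
    (\<forall>\<epsilon>>0. \<exists>N. \<forall>n\<ge>N. \<forall>x\<in>A. hausd (farQ (sphere 0 1) x (1 / real n)) (farQ0 (sphere 0 1) x) \<le> \<epsilon>)"
    by blast
next
  assume "(\<forall>x\<in>A. farQ0 (sphere 0 1) x = {- sgn x}) \<and>
    (\<forall>\<epsilon>>0. \<exists>N. \<forall>n\<ge>N. \<forall>x\<in>A. hausd (farQ (sphere 0 1) x (1 / real n)) (farQ0 (sphere 0 1) x) \<le> \<epsilon>)"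
  then have Q0: "\<forall>x\<in>A. farQ0 (sphere 0 1) x = {- sgn x}"
    and hausd: "\<forall>\<epsilon>>0. \<exists>N. \<forall>n\<ge>N. \<forall>x\<in>A. hausd (farQ (sphere 0 1) x (1 / real n)) (farQ0 (sphere 0 1) x) \<le> \<epsilon>"
    by blast+
  from hausd have "\<forall>\<epsilon>>0. \<exists>N. \<forall>n\<ge>N. \<forall>x\<in>A. farQ (sphere 0 1) x (1 / real n) \<subseteq> cball (- sgn x) \<epsilon>"
  proof (rule uniformly_small_transfer[where c = 2])
    fix n x \<epsilon>
    assume "x \<in> A" "\<epsilon> > 0" "hausd (farQ (sphere 0 1) x (1 / real n)) (farQ0 (sphere 0 1) x) \<le> \<epsilon>"
    then show "farQ (sphere 0 1) x (1 / real n) \<subseteq> cball (- sgn x) (2 * \<epsilon>)"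
      using assms Q0
      by (intro subset_cball_of_hausd_singleton_less bounded_farQ_unit_sphere antipode_mem_farQ) auto
  qed simp
  then show "far_points_near_antipode_on A"
    by (simp only: far_points_near_antipode_on_iff_seq)
qed

lemma rad_sets_farQ_unit_sphere_near:
  fixes x x' :: "'a::real_normed_vector"
  assumes "x \<noteq> 0" "x' \<noteq> 0" "0 \<le> d"
    and "farQ (sphere 0 1) x d \<subseteq> cball (- sgn x) e" "farQ (sphere 0 1) x' d \<subseteq> cball (- sgn x') e'"
  shows "\<bar>rad_sets (farQ (sphere 0 1) x d) (farQ (sphere 0 1) x' d) - norm (sgn x - sgn x')\<bar> \<le> e + e'"
proof -
  have "dist (- sgn x) (- sgn x') = norm (sgn x - sgn x')"
    by (metis dist_minus dist_norm)
  then show ?thesis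
    using rad_sets_near_centres[OF antipode_mem_farQ[OF assms(1,3)] antipode_mem_farQ[OF assms(2,3)] assms(4,5)]
    by simp
qed

lemma farQ_unit_sphere_subset_cball_rad_sets:
  fixes x :: "'a::real_normed_vector"
  assumes "x \<noteq> 0" "0 \<le> d"
  shows "farQ (sphere 0 1) x d \<subseteq> cball (- sgn x) (rad_sets (farQ (sphere 0 1) x d) (farQ (sphere 0 1) x d))"
  using norm_diff_le_rad_sets[OF bounded_farQ_unit_sphere bounded_farQ_unit_sphere antipode_mem_farQ[OF assms]]
  by (auto simp: dist_norm)

lemma far_points_near_antipode_on_iff_rad_sets:
  assumes "0 \<notin> A"
  shows "far_points_near_antipode_on A \<longleftrightarrow>
    (\<forall>\<epsilon>>0. \<exists>N. \<forall>n\<ge>N. \<forall>x\<in>A. \<forall>x'\<in>A.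
       \<bar>rad_sets (farQ (sphere 0 1) x (1 / real n)) (farQ (sphere 0 1) x' (1 / real n))
          - norm (sgn x - sgn x')\<bar> \<le> \<epsilon>)"
  unfolding far_points_near_antipode_on_iff_seq
proof
  assume near: "\<forall>\<epsilon>>0. \<exists>N. \<forall>n\<ge>N. \<forall>x\<in>A. farQ (sphere 0 1) x (1 / real n) \<subseteq> cball (- sgn x) \<epsilon>"
  show "\<forall>\<epsilon>>0. \<exists>N. \<forall>n\<ge>N. \<forall>x\<in>A. \<forall>x'\<in>A.
       \<bar>rad_sets (farQ (sphere 0 1) x (1 / real n)) (farQ (sphere 0 1) x' (1 / real n))
          - norm (sgn x - sgn x')\<bar> \<le> \<epsilon>"
  proof (intro allI impI)
    fix \<epsilon> :: real
    assume "\<epsilon> > 0"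
    then have "\<epsilon> / 2 > 0"
      by simp
    with near obtain N where N: "\<forall>n\<ge>N. \<forall>x\<in>A. farQ (sphere 0 1) x (1 / real n) \<subseteq> cball (- sgn x) (\<epsilon> / 2)"
      by blast
    have "\<bar>rad_sets (farQ (sphere 0 1) x (1 / real n)) (farQ (sphere 0 1) x' (1 / real n))
            - norm (sgn x - sgn x')\<bar> \<le> \<epsilon> / 2 + \<epsilon> / 2"
      if "n \<ge> N" "x \<in> A" "x' \<in> A" for n x x'
      using that assms N by (intro rad_sets_farQ_unit_sphere_near) auto
    then show "\<exists>N. \<forall>n\<ge>N. \<forall>x\<in>A. \<forall>x'\<in>A.
         \<bar>rad_sets (farQ (sphere 0 1) x (1 / real n)) (farQ (sphere 0 1) x' (1 / real n))
            - norm (sgn x - sgn x')\<bar> \<le> \<epsilon>"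
      by auto
  qed
next
  assume "\<forall>\<epsilon>>0. \<exists>N. \<forall>n\<ge>N. \<forall>x\<in>A. \<forall>x'\<in>A.
       \<bar>rad_sets (farQ (sphere 0 1) x (1 / real n)) (farQ (sphere 0 1) x' (1 / real n))
          - norm (sgn x - sgn x')\<bar> \<le> \<epsilon>"
  then show "\<forall>\<epsilon>>0. \<exists>N. \<forall>n\<ge>N. \<forall>x\<in>A. farQ (sphere 0 1) x (1 / real n) \<subseteq> cball (- sgn x) \<epsilon>"
  proof (rule uniformly_small_transfer[where c = 1])
    fix n x \<epsilon>
    assume "x \<in> A" "\<forall>x'\<in>A. \<bar>rad_sets (farQ (sphere 0 1) x (1 / real n)) (farQ (sphere 0 1) x' (1 / real n))
          - norm (sgn x - sgn x')\<bar> \<le> \<epsilon>"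
    then have "rad_sets (farQ (sphere 0 1) x (1 / real n)) (farQ (sphere 0 1) x (1 / real n)) \<le> \<epsilon>"
      by fastforce
    moreover have "farQ (sphere 0 1) x (1 / real n)
        \<subseteq> cball (- sgn x) (rad_sets (farQ (sphere 0 1) x (1 / real n)) (farQ (sphere 0 1) x (1 / real n)))"
      using assms \<open>x \<in> A\<close> by (intro farQ_unit_sphere_subset_cball_rad_sets) auto
    ultimately show "farQ (sphere 0 1) x (1 / real n) \<subseteq> cball (- sgn x) (1 * \<epsilon>)"
      by (simp add: subset_cball order_trans)
  qed simp
qed

lemma far_points_near_antipode_on_iff_USUR:
  assumes "0 \<notin> A"
  shows "far_points_near_antipode_on A \<longleftrightarrow> USUR (sphere 0 1) A"
proof
  assume near: "far_points_near_antipode_on A"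
  then have "\<forall>x\<in>A. farQ0 (sphere 0 1) x = {- sgn x}"
    using assms farQ0_unit_sphere_eq_antipode by fastforce
  with near show "USUR (sphere 0 1) A"
    unfolding USUR_def far_points_near_antipode_on_def by (simp add: enlarge_singleton)
next
  assume usur: "USUR (sphere 0 1) A"
  have "farQ0 (sphere 0 1) x = {- sgn x}" if "x \<in> A" for x
  proof -
    obtain y where "farQ0 (sphere 0 1) x = {y}"
      using usur \<open>x \<in> A\<close> unfolding USUR_def by blast
    moreover have "- sgn x \<in> farQ0 (sphere 0 1) x"
      using antipode_mem_farQ[of x 0] assms \<open>x \<in> A\<close> by (auto simp: farQ0_def)
    ultimately show ?thesis
      by simp
  qed
  with usur show "far_points_near_antipode_on A"
    unfolding USUR_def far_points_near_antipode_on_def by (simp add: enlarge_singleton)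
qed

theorem theorem3p9:
  fixes \<alpha> :: real
  assumes "\<alpha> > 0"
  defines "S \<equiv> sphere (0::'a::banach) 1"
      and "X\<alpha> \<equiv> {x::'a. \<alpha> < norm x}"
  shows
   "(UR TYPE('a) \<longleftrightarrow>
      (\<forall>\<epsilon>>0. \<exists>N. \<forall>n\<ge>N. \<forall>x\<in>X\<alpha>. \<forall>x'\<in>X\<alpha>.
         \<bar>rad_sets (farQ S x (1 / real n)) (farQ S x' (1 / real n))
            - norm (x /\<^sub>R norm x - x' /\<^sub>R norm x')\<bar> \<le> \<epsilon>)) \<and>
    (UR TYPE('a) \<longleftrightarrow>
      (\<forall>\<epsilon>>0. \<exists>N. \<forall>n\<ge>N. \<forall>x\<in>X\<alpha>. diameter (farQ S x (1 / real n)) \<le> \<epsilon>)) \<and>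
    (UR TYPE('a) \<longleftrightarrow>
      (\<forall>x\<in>X\<alpha>. farQ0 S x = {- (x /\<^sub>R norm x)}) \<and>
      (\<forall>\<epsilon>>0. \<exists>N. \<forall>n\<ge>N. \<forall>x\<in>X\<alpha>. hausd (farQ S x (1 / real n)) (farQ0 S x) \<le> \<epsilon>)) \<and>
    (UR TYPE('a) \<longleftrightarrow> USUR S X\<alpha>)"
proof -
  have "0 \<notin> X\<alpha>"
    using assms(1) by (simp add: X\<alpha>_def)
  have UR: "UR TYPE('a) \<longleftrightarrow> far_points_near_antipode_on X\<alpha>"
    unfolding X\<alpha>_def using assms(1) by (rule UR_iff_far_points_near_antipode)
  show ?thesis
    unfolding S_def UR sgn_div_norm[symmetric]
    using far_points_near_antipode_on_iff_rad_sets[OF \<open>0 \<notin> X\<alpha>\<close>]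
      far_points_near_antipode_on_iff_diameter[OF \<open>0 \<notin> X\<alpha>\<close>]
      far_points_near_antipode_on_iff_hausd[OF \<open>0 \<notin> X\<alpha>\<close>]
      far_points_near_antipode_on_iff_USUR[OF \<open>0 \<notin> X\<alpha>\<close>]
    by (intro conjI)
qed

end
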